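(* For every integer $r\ge0$, \[ \sum_{n=1}^{\infty}\frac{h_n^{(r)}}{(n+1)(n+2)\cdots(n+r+1)}=\frac{1}{r!}, \] equivalently $\sum_{n=1}^{\infty}h_n^{(r)}B(r+1,n+1)=1$.
   Context: Hyperharmonic numbers: $h_n^{(0)}=1/n$ for $n\ge1$, and for $r\ge1$, $h_n^{(r)}=\sum_{j=1}^{n}h_j^{(r-1)}$. $B(x,y)=\int_0^1t^{x-1}(1-t)^{y-1}\,dt$ is the Beta function. *)

theory Defs
  imports "HOL-Analysis.Analysis"
begin

text \<open>Hyperharmonic numbers: hyp 0 n = 1/n (n >= 1), hyp (r+1) n = sum_{j=1}^n hyp r j.
  The value at n = 0 is irrelevant (only n >= 1 is used); for r = 0 it is 1/0 = 0.\<close>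
fun hyp :: "nat \<Rightarrow> nat \<Rightarrow> real" where
  "hyp 0 n = 1 / real n"
| "hyp (Suc r) n = (\<Sum>j=1..n. hyp r j)"

end

theory Submission
  imports Defs "HOL-Real_Asymp.Real_Asymp"
begin

(* Write  P s x = 1 / ((x+1)(x+2)...(x+s+1))  (a reciprocal rising factorial)
   and  S r N = sum_{n=1..N} h_n^(r) P r n  for the partial sums of the series.
   (1) P telescopes:  P s x - P s (x+1) = (s+1) P (s+1) x.
   (2) Summation by parts with h_n^(s+1) - h_{n-1}^(s+1) = h_n^(s) and (1) gives
         S (s+1) N = (S s N - h_N^(s+1) P s (N+1)) / (s+1).
   (3) The boundary term tends to 0, since h_N^(s+1) <= N^s H_N and P s (N+1) <= (N+1)^-(s+1),
       while H_N / (N+1) -> 0.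
   (4) S 0 N = 1 - 1/(N+1) -> 1, so by induction on r, S r N -> 1/r!.
   Finally B(r+1, m+2) = r! P r (m+1) turns the first series into the second. *)

definition inv_rising :: "nat \<Rightarrow> real \<Rightarrow> real" where
  "inv_rising s x = 1 / pochhammer (x + 1) (s + 1)"

lemma inv_rising_nonneg: "x \<ge> 0 \<Longrightarrow> inv_rising s x \<ge> 0"
  unfolding inv_rising_def using pochhammer_pos[of "x + 1" "s + 1"] by simp

lemma prod_eq_pochhammer:
  "(\<Prod>k=1..r+1. real (m + k)) = pochhammer (real m + 1) (r + 1)"
proof -
  have "(\<Prod>k=1..r+1. real (m + k)) = (\<Prod>i=0..<r+1. real m + 1 + of_nat i)"
    by (rule prod.reindex_bij_witness[where i="\<lambda>i. i + 1" and j="\<lambda>k. k - 1"]) auto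
  then show ?thesis
    by (simp add: pochhammer_prod)
qed

lemma inv_rising_telescope:
  assumes "x \<ge> 0"
  shows "inv_rising s x - inv_rising s (x + 1) = real (s + 1) * inv_rising (Suc s) x"
proof -
  define p where "p = pochhammer (x + 1) (s + 1)"
  define q where "q = pochhammer (x + 2) (s + 1)"
  define t where "t = pochhammer (x + 1) (s + 2)"
  have p: "p > 0" and q: "q > 0" and t: "t > 0"
    unfolding p_def q_def t_def using assms by (auto intro: pochhammer_pos)
  have t_last: "t = p * (x + 1 + real (s + 1))"
    unfolding t_def p_def using pochhammer_Suc[of "x + 1" "s + 1"] by (simp add: add_ac)
  have t_first: "t = (x + 1) * q"
    unfolding t_def q_def using pochhammer_rec[of "x + 1" "s + 1"] by (simp add: add_ac)
  have "1 / p - 1 / q = (t / p - t / q) / t"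
    using t by (simp add: diff_divide_distrib)
  also have "\<dots> = real (s + 1) / t"
  proof -
    have "t / p = x + 1 + real (s + 1)"
      using p by (simp add: t_last)
    moreover have "t / q = x + 1"
      using q by (simp add: t_first)
    ultimately show ?thesis by simp
  qed
  finally show ?thesis
    unfolding inv_rising_def p_def q_def t_def
    by (simp add: add_ac numeral_2_eq_2)
qed

lemma power_le_pochhammer:
  fixes x :: real
  assumes "x \<ge> 0"
  shows "x ^ k \<le> pochhammer x k"
proof (induction k)
  case (Suc k)
  have "x ^ Suc k = x ^ k * x" by simp
  also have "\<dots> \<le> pochhammer x k * (x + real k)"
    using Suc assms by (intro mult_mono) (auto simp: pochhammer_prod intro!: prod_nonneg)
  also have "\<dots> = pochhammer x (Suc k)" by (simp add: pochhammer_Suc)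
  finally show ?case .
qed simp

lemma Beta_nat_pochhammer:
  fixes y :: real
  assumes "y > 0"
  shows "Beta (real r + 1) y = fact r / pochhammer y (r + 1)"
proof -
  have "y \<notin> \<int>\<^sub>\<le>\<^sub>0"
    using assms nonpos_Ints_nonpos by fastforce
  then have "pochhammer y (r + 1) = Gamma (y + real (r + 1)) / Gamma y"
    by (rule pochhammer_Gamma)
  moreover have "Gamma (real r + 1) = fact r"
    using Gamma_fact[of r] by (simp add: add.commute)
  ultimately show ?thesis
    by (simp add: Beta_def add_ac)
qed

lemma hyp_nonneg: "hyp r n \<ge> 0"
  by (induction r arbitrary: n) (auto intro: sum_nonneg)

text \<open>\<open>h_n^(s+1) \<le> n^s H_n\<close>: each summation step costs at most a factor \<open>n\<close>.\<close>
lemma hyp_le_power_harm: "hyp (Suc s) n \<le> real n ^ s * harm n"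
proof (induction s arbitrary: n)
  case 0
  show ?case by (simp add: harm_def divide_inverse)
next
  case (Suc s)
  have "hyp (Suc (Suc s)) n = (\<Sum>j=1..n. hyp (Suc s) j)" by simp
  also have "\<dots> \<le> (\<Sum>j=1..n. real n ^ s * harm n)"
  proof (rule sum_mono)
    fix j assume "j \<in> {1..n}"
    then have "real j ^ s * harm j \<le> real n ^ s * harm n"
      by (intro mult_mono power_mono harm_mono) (auto intro: harm_nonneg)
    with Suc show "hyp (Suc s) j \<le> real n ^ s * harm n"
      by (meson order_trans)
  qed
  also have "\<dots> = real n ^ Suc s * harm n" by simp
  finally show ?case .
qed

text \<open>\<open>H_N = \<gamma> + ln N + o(1)\<close>, so \<open>H_N = o(N)\<close>.\<close>
lemma harm_over_linear: "(\<lambda>N. harm N / (real N + 1)) \<longlonglongrightarrow> 0"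
proof -
  have "(\<lambda>N. (harm N - ln (real N)) * (1 / (real N + 1)) + ln (real N) / (real N + 1))
          \<longlonglongrightarrow> euler_mascheroni * 0 + 0"
    by (intro tendsto_add tendsto_mult euler_mascheroni_LIMSEQ) real_asymp+
  then show ?thesis
    by (simp add: divide_inverse algebra_simps)
qed

lemma boundary_term_tendsto_0:
  "(\<lambda>N. hyp (Suc s) N * inv_rising s (real N + 1)) \<longlonglongrightarrow> 0"
proof (rule tendsto_sandwich[OF _ _ tendsto_const harm_over_linear])
  show "\<forall>\<^sub>F N in sequentially. 0 \<le> hyp (Suc s) N * inv_rising s (real N + 1)"
    by (intro always_eventually allI mult_nonneg_nonneg hyp_nonneg inv_rising_nonneg) simp
  show "\<forall>\<^sub>F N in sequentially. hyp (Suc s) N * inv_rising s (real N + 1) \<le> harm N / (real N + 1)"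
  proof (intro always_eventually allI)
    fix N
    define x where "x = real N + 1"
    have x: "x > 0" unfolding x_def by simp
    have "x ^ (s + 1) \<le> pochhammer (x + 1) (s + 1)"
      using power_le_pochhammer[of "x + 1" "s + 1"] power_mono[of x "x + 1" "s + 1"] x by simp
    then have "inv_rising s x \<le> 1 / x ^ (s + 1)"
      unfolding inv_rising_def using x pochhammer_pos[of "x + 1" "s + 1"]
      by (intro divide_left_mono) auto
    then have "hyp (Suc s) N * inv_rising s x \<le> real N ^ s * harm N * (1 / x ^ (s + 1))"
      using x
      by (intro mult_mono hyp_le_power_harm)
         (auto intro!: mult_nonneg_nonneg harm_nonneg inv_rising_nonneg)
    also have "\<dots> = (real N / x) ^ s * (harm N / x)"
      using x by (simp add: power_divide field_simps)
    also have "\<dots> \<le> harm N / x"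
      using x unfolding x_def
      by (intro mult_left_le_one_le power_le_one) (auto intro: harm_nonneg divide_nonneg_pos)
    finally show "hyp (Suc s) N * inv_rising s (real N + 1) \<le> harm N / (real N + 1)"
      unfolding x_def .
  qed
qed

definition partial_sum :: "nat \<Rightarrow> nat \<Rightarrow> real" where
  "partial_sum r N = (\<Sum>n=1..N. hyp r n * inv_rising r (real n))"

lemma partial_sum_0: "partial_sum 0 N = 1 - 1 / (real N + 1)"
proof (induction N)
  case (Suc N)
  have "partial_sum 0 (Suc N) = 1 - 1 / (real N + 1) + 1 / ((real N + 1) * (real N + 2))"
    using Suc by (simp add: partial_sum_def inv_rising_def add_ac)
  also have "\<dots> = 1 - 1 / (real (Suc N) + 1)"
    by (simp add: divide_simps) (simp add: algebra_simps)
  finally show ?case .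
qed (simp add: partial_sum_def)

text \<open>Summation by parts, using \<open>h_{N+1}^(s+1) = h_N^(s+1) + h_{N+1}^(s)\<close> and the telescoping identity.\<close>
lemma partial_sum_Suc:
  "partial_sum (Suc s) N
     = (partial_sum s N - hyp (Suc s) N * inv_rising s (real N + 1)) / real (s + 1)"
proof (induction N)
  case (Suc N)
  define P where "P = (\<lambda>n. inv_rising s (real n))"
  have P_Suc: "P (Suc N) = inv_rising s (real N + 1)"
    by (simp add: P_def add.commute)
  have tele: "inv_rising (Suc s) (real (Suc N)) = (P (Suc N) - P (Suc (Suc N))) / real (s + 1)"
    using inv_rising_telescope[of "real (Suc N)" s] unfolding P_def by (simp add: field_simps)
  have "partial_sum (Suc s) (Suc N)
          = partial_sum (Suc s) N + hyp (Suc s) (Suc N) * inv_rising (Suc s) (real (Suc N))"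
    by (simp add: partial_sum_def)
  also have "\<dots> = ((partial_sum s N - hyp (Suc s) N * P (Suc N))
                  + (hyp (Suc s) N + hyp s (Suc N)) * (P (Suc N) - P (Suc (Suc N)))) / real (s + 1)"
    unfolding Suc tele P_Suc[symmetric] by (simp add: add_divide_distrib)
  also have "\<dots> = (partial_sum s N + hyp s (Suc N) * P (Suc N)
                  - hyp (Suc s) (Suc N) * P (Suc (Suc N))) / real (s + 1)"
    by (simp add: algebra_simps)
  also have "\<dots> = (partial_sum s (Suc N) - hyp (Suc s) (Suc N) * inv_rising s (real (Suc N) + 1))
                  / real (s + 1)"
    by (simp add: partial_sum_def P_def add.commute)
  finally show ?case .
qed (simp add: partial_sum_def)

lemma partial_sum_tendsto: "partial_sum r \<longlonglongrightarrow> 1 / fact r"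
proof (induction r)
  case 0
  have "(\<lambda>N. 1 - 1 / (real N + 1)) \<longlonglongrightarrow> 1" by real_asymp
  then show ?case by (simp add: partial_sum_0)
next
  case (Suc s)
  have "(\<lambda>N. (partial_sum s N - hyp (Suc s) N * inv_rising s (real N + 1)) / real (s + 1))
          \<longlonglongrightarrow> (1 / fact s - 0) / real (s + 1)"
    by (intro tendsto_divide tendsto_diff Suc boundary_term_tendsto_0 tendsto_const) simp
  then show ?case
    by (simp add: partial_sum_Suc[abs_def] field_simps del: of_nat_Suc)
qed

theorem proposition5:
  fixes r :: nat
  shows "(\<lambda>m. hyp r (m + 1) / (\<Prod>k=1..r+1. real (m + 1 + k))) sums (1 / fact r)
       \<and> (\<lambda>m. hyp r (m + 1) * Beta (real r + 1) (real (m + 1) + 1)) sums 1"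
proof -
  define a where "a = (\<lambda>m. hyp r (m + 1) * inv_rising r (real (m + 1)))"
  have "(\<Sum>m<N. a m) = partial_sum r N" for N
    unfolding a_def partial_sum_def by (induction N) auto
  then have series: "a sums (1 / fact r)"
    unfolding sums_def using partial_sum_tendsto by presburger
  have "(\<lambda>m. hyp r (m + 1) / (\<Prod>k=1..r+1. real (m + 1 + k))) = a"
    unfolding a_def inv_rising_def by (subst prod_eq_pochhammer) simp
  moreover have "(\<lambda>m. hyp r (m + 1) * Beta (real r + 1) (real (m + 1) + 1)) = (\<lambda>m. fact r * a m)"
    unfolding a_def inv_rising_def by (subst Beta_nat_pochhammer) auto
  moreover have "(\<lambda>m. fact r * a m) sums (fact r * (1 / fact r))"
    by (rule sums_mult[OF series])
  ultimately show ?thesis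
    using series by simp
qed

end
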